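(* Let $p,q$ satisfy $\frac1p+\frac1q=1$, and let $(\hat f(j,k))_{(j,k)\in\mathbb{Z}^2}\in \ell^q(\mathbb{Z}^2)$. Define, for $(j,k)\in\mathbb{Z}^2$ with $2j\neq\pm k$, $\hat u(j,k)=\frac{\hat f(j,k)}{4j^2-k^2}$, and let \[ u(x,t)=\sum_{(j,k)\in\mathbb{Z}^2,\ 2j\neq \pm k}\hat u(j,k)e^{2ijx+ikt}. \] Then $u\in C^{\gamma}$ for every $\gamma$ with $0<\gamma<1-\frac1p$.
   Context: $\ell^q=\{(\hat u(j,k))_{(j,k)\in\mathbb{Z}^2}:\sum_{(j,k)}|\hat u(j,k)|^q<\infty\}$. $C^\gamma$ denotes the space of $\gamma$-Hölder continuous functions of $(x,t)$, $\pi$-periodic in $x$ and $2\pi$-periodic in $t$. *)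

theory Defs
  imports "HOL-Analysis.Analysis"
begin

definition in_ellq :: "real \<Rightarrow> (int \<times> int \<Rightarrow> complex) \<Rightarrow> bool" where
  "in_ellq q a \<longleftrightarrow> (\<lambda>jk. norm (a jk) powr q) summable_on UNIV"

definition nonres :: "(int \<times> int) set" where
  "nonres = {(j, k). 2 * j \<noteq> k \<and> 2 * j \<noteq> - k}"

definition uhat :: "(int \<times> int \<Rightarrow> complex) \<Rightarrow> int \<times> int \<Rightarrow> complex" where
  "uhat f jk = f jk / of_int (4 * (fst jk)^2 - (snd jk)^2)"

definition useries :: "(int \<times> int \<Rightarrow> complex) \<Rightarrow> real \<Rightarrow> real \<Rightarrow> complex" where
  "useries f x t = (\<Sum>\<^sub>\<infinity>jk\<in>nonres. uhat f jk *
      exp (\<i> * of_real (2 * of_int (fst jk) * x + of_int (snd jk) * t)))"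

definition holder_periodic :: "real \<Rightarrow> (real \<Rightarrow> real \<Rightarrow> complex) \<Rightarrow> bool" where
  "holder_periodic \<gamma> u \<longleftrightarrow>
     (\<forall>x t. u (x + pi) t = u x t \<and> u x (t + 2 * pi) = u x t) \<and>
     (\<exists>C. \<forall>x t x' t'. norm (u x t - u x' t') \<le> C * (sqrt ((x - x')^2 + (t - t')^2)) powr \<gamma>)"

end

theory Submission
  imports Defs
begin

text \<open>Each term of the series moves by at most \<open>|f(j,k)| w(j,k) |(x,t) - (x',t')|^\<gamma>\<close>
  with \<open>w(j,k) = 2 (2|j| + |k|)^\<gamma> / |4j^2 - k^2|\<close>, because \<open>|e^(ia) - e^(ib)| \<le> 2 |a - b|^\<gamma>\<close>.
  As \<open>4j^2 - k^2 = (2j - k)(2j + k)\<close> and \<open>2|j| + |k| \<le> |2j - k| + |2j + k|\<close>, the weight is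
  at most a constant times \<open>|2j - k|^(\<gamma>-1) |2j + k|^(\<gamma>-1)\<close>, which lies in \<open>\<ell>^p\<close> as soon as
  \<open>(1 - \<gamma>) p > 1\<close>, i.e. \<open>\<gamma> < 1 - 1/p\<close>. Young's inequality then makes \<open>|f| w\<close> summable
  for \<open>f \<in> \<ell>^q\<close>, and its sum is a H\<ouml>lder constant.\<close>

lemma summable_on_abs_powr_int:
  fixes s :: real
  assumes "s > 1"
  shows "(\<lambda>n::int. real_of_int \<bar>n\<bar> powr (-s)) summable_on -{0}"
proof -
  let ?g = "\<lambda>n::int. real_of_int \<bar>n\<bar> powr (-s)"
  have "summable (\<lambda>n. real (Suc n) powr (-s))"
    using assms by (subst summable_Suc_iff) (simp add: summable_real_powr_iff)
  hence S: "(\<lambda>n. real (Suc n) powr (-s)) summable_on UNIV"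
    by (rule summable_nonneg_imp_summable_on) simp
  have pos: "?g summable_on range (\<lambda>n. int (Suc n))"
    using S by (subst summable_on_reindex) (auto simp: inj_on_def o_def add.commute)
  have neg: "?g summable_on range (\<lambda>n. - int (Suc n))"
    using S by (subst summable_on_reindex) (auto simp: inj_on_def o_def add.commute)
  have split: "-{0} = range (\<lambda>n. int (Suc n)) \<union> range (\<lambda>n. - int (Suc n))"
  proof (intro set_eqI iffI)
    fix n :: int assume "n \<in> -{0}"
    hence "n = int (Suc (nat (n - 1))) \<or> n = - int (Suc (nat (-n - 1)))" by auto
    thus "n \<in> range (\<lambda>n. int (Suc n)) \<union> range (\<lambda>n. - int (Suc n))" by blast
  qed auto
  show ?thesis unfolding split by (rule summable_on_Un_disjoint[OF pos neg]) auto
qed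

lemma summable_on_times_nonneg:
  fixes h g :: "'a \<Rightarrow> real"
  assumes "h summable_on A" "g summable_on B" "\<And>a. a \<in> A \<Longrightarrow> h a \<ge> 0" "\<And>b. b \<in> B \<Longrightarrow> g b \<ge> 0"
  shows "(\<lambda>(a, b). h a * g b) summable_on A \<times> B"
proof (rule summable_on_SigmaI)
  show "((\<lambda>b. case (a, b) of (a, b) \<Rightarrow> h a * g b) has_sum h a * infsum g B) B" for a
    using assms(2) by (simp add: has_sum_cmult_right)
  show "(\<lambda>a. h a * infsum g B) summable_on A"
    using assms(1) by (rule summable_on_cmult_left)
qed (use assms in auto)

lemma summable_on_mult_Young:
  fixes a b :: "'a \<Rightarrow> real" and p q :: real
  assumes "p > 1" "q > 1" "1 / p + 1 / q = 1"
    and "\<And>x. a x \<ge> 0" "\<And>x. b x \<ge> 0"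
    and "(\<lambda>x. a x powr p) summable_on A" "(\<lambda>x. b x powr q) summable_on A"
  shows "(\<lambda>x. a x * b x) summable_on A"
proof (rule summable_on_comparison_test)
  show "(\<lambda>x. a x powr p * (1 / p) + b x powr q * (1 / q)) summable_on A"
    using assms(6,7) by (intro summable_on_add summable_on_cmult_left)
  show "a x * b x \<le> a x powr p * (1 / p) + b x powr q * (1 / q)" for x
    using Youngs_inequality[OF assms(1-3) assms(4,5)[of x]] by simp
qed (use assms(4,5) in simp)

lemma norm_infsum_diff_le:
  fixes u v :: "'a \<Rightarrow> 'b::banach"
  assumes "u summable_on A" "v summable_on A" "W summable_on A"
    and "\<And>i. i \<in> A \<Longrightarrow> norm (u i - v i) \<le> W i"
  shows "norm (infsum u A - infsum v A) \<le> infsum W A"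
proof (rule norm_infsum_le[OF _ _ assms(4)])
  show "((\<lambda>i. u i - v i) has_sum infsum u A - infsum v A) A"
    using has_sum_add[OF has_sum_infsum[OF assms(1)] has_sum_infsum[of "\<lambda>i. - v i"]] assms(2)
    by (simp add: infsum_uminus summable_on_uminus)
  show "(W has_sum infsum W A) A" using assms(3) by (rule has_sum_infsum)
qed

lemma norm_exp_i_diff_le_powr:
  fixes g a b :: real
  assumes "0 < g" "g \<le> 1"
  shows "norm (exp (\<i> * of_real a) - exp (\<i> * of_real b)) \<le> 2 * \<bar>a - b\<bar> powr g"
proof -
  define t where "t = a - b"
  have "exp (\<i> * of_real a) - exp (\<i> * of_real b) = exp (\<i> * of_real b) * (exp (\<i> * of_real t) - 1)"
    unfolding t_def by (simp add: algebra_simps exp_add[symmetric])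
  hence "norm (exp (\<i> * of_real a) - exp (\<i> * of_real b)) = 2 * \<bar>sin (t/2)\<bar>"
    by (simp add: norm_mult dist_exp_i_1)
  also have "\<dots> \<le> 2 * \<bar>t\<bar> powr g"
  proof (cases "\<bar>t\<bar> \<ge> 1")
    case True
    have "1 \<le> \<bar>t\<bar> powr g" using True assms by (intro ge_one_powr_ge_zero) auto
    thus ?thesis using abs_sin_le_one[of "t/2"] by linarith
  next
    case False
    have "2 * \<bar>sin (t/2)\<bar> \<le> \<bar>t\<bar> powr 1" using abs_sin_x_le_abs_x[of "t/2"] by simp
    also have "\<dots> \<le> \<bar>t\<bar> powr g" using False assms by (intro powr_mono') auto
    finally show ?thesis by simp
  qed
  finally show ?thesis unfolding t_def .
qed

lemma powr_div_prod_le: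
  fixes A B m g p :: real
  assumes "A \<ge> 1" "B \<ge> 1" "0 \<le> m" "m \<le> A + B" "0 < g" "g < 1" "p > 0"
  shows "(2 * m powr g / (A * B)) powr p \<le> (2 * 2 powr g) powr p * (A powr (-((1-g)*p)) * B powr (-((1-g)*p)))"
proof -
  have AB: "A * B \<ge> 1" using mult_mono[of 1 A 1 B] assms by simp
  have "A \<le> A * B" "B \<le> A * B" using assms by simp_all
  hence "m \<le> 2 * (A * B)" using assms by linarith
  hence "m powr g \<le> 2 powr g * (A * B) powr g"
    using assms AB by (metis powr_mono2 powr_mult less_imp_le mult_nonneg_nonneg zero_le_numeral order.trans zero_le_one)
  hence "2 * m powr g / (A * B) \<le> 2 * 2 powr g * (A * B) powr (g - 1)"
    using AB by (simp add: powr_diff divide_right_mono mult.assoc)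
  hence "(2 * m powr g / (A * B)) powr p \<le> (2 * 2 powr g * (A * B) powr (g - 1)) powr p"
    using assms AB by (intro powr_mono2) auto
  also have "\<dots> = (2 * 2 powr g) powr p * (A * B) powr (-((1-g)*p))"
    using AB by (simp add: powr_mult powr_powr algebra_simps)
  also have "\<dots> = (2 * 2 powr g) powr p * (A powr (-((1-g)*p)) * B powr (-((1-g)*p)))"
    using assms by (simp add: powr_mult)
  finally show ?thesis .
qed

definition holder_weight :: "real \<Rightarrow> int \<times> int \<Rightarrow> real" where
  "holder_weight g jk =
     2 * real_of_int (2 * \<bar>fst jk\<bar> + \<bar>snd jk\<bar>) powr g / real_of_int \<bar>4 * (fst jk)^2 - (snd jk)^2\<bar>"

lemma holder_weight_nonneg: "holder_weight g jk \<ge> 0"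
  unfolding holder_weight_def by simp

lemma holder_weight_powr_le:
  assumes "(j, k) \<in> nonres" "0 < g" "g < 1" "p > 0"
  shows "holder_weight g (j, k) powr p \<le> (2 * 2 powr g) powr p *
    (real_of_int \<bar>2*j - k\<bar> powr (-((1-g)*p)) * real_of_int \<bar>2*j + k\<bar> powr (-((1-g)*p)))"
proof -
  have "\<bar>4*j^2 - k^2\<bar> = \<bar>2*j - k\<bar> * \<bar>2*j + k\<bar>"
    by (simp add: abs_mult[symmetric] algebra_simps power2_eq_square)
  hence "holder_weight g (j, k) =
      2 * real_of_int (2*\<bar>j\<bar> + \<bar>k\<bar>) powr g / (real_of_int \<bar>2*j - k\<bar> * real_of_int \<bar>2*j + k\<bar>)"
    unfolding holder_weight_def by (metis fst_conv snd_conv of_int_mult)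
  moreover have "2*\<bar>j\<bar> + \<bar>k\<bar> \<le> \<bar>2*j - k\<bar> + \<bar>2*j + k\<bar>" by arith
  ultimately show ?thesis
    using assms unfolding nonres_def
    by (auto intro!: powr_div_prod_le simp del: of_int_add of_int_mult of_int_abs)
qed

lemma holder_weight_powr_summable:
  assumes "0 < g" "g < 1" "p > 0" "(1-g) * p > 1"
  shows "(\<lambda>jk. holder_weight g jk powr p) summable_on nonres"
proof -
  define h where "h = (\<lambda>n::int. real_of_int \<bar>n\<bar> powr (-((1-g)*p)))"
  define \<phi> where "\<phi> = (\<lambda>jk::int \<times> int. (2 * fst jk - snd jk, 2 * fst jk + snd jk))"
  have "(\<lambda>(a, b). h a * h b) summable_on (-{0}) \<times> (-{0})"
    using summable_on_abs_powr_int[OF assms(4)]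
    by (intro summable_on_times_nonneg) (simp_all add: h_def)
  moreover have "\<phi> ` nonres \<subseteq> (-{0}) \<times> (-{0})" "inj_on \<phi> nonres"
    unfolding \<phi>_def nonres_def inj_on_def by auto
  ultimately have "((\<lambda>(a, b). h a * h b) \<circ> \<phi>) summable_on nonres"
    by (metis summable_on_reindex summable_on_subset)
  hence "(\<lambda>jk. (2 * 2 powr g) powr p * ((\<lambda>(a, b). h a * h b) \<circ> \<phi>) jk) summable_on nonres"
    by (rule summable_on_cmult_right)
  thus ?thesis
  proof (rule summable_on_comparison_test)
    fix jk assume "jk \<in> nonres"
    thus "holder_weight g jk powr p \<le> (2 * 2 powr g) powr p * ((\<lambda>(a, b). h a * h b) \<circ> \<phi>) jk"
      using holder_weight_powr_le[of "fst jk" "snd jk"] assms by (simp add: h_def \<phi>_def)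
  qed simp
qed

definition uterm :: "(int \<times> int \<Rightarrow> complex) \<Rightarrow> real \<Rightarrow> real \<Rightarrow> int \<times> int \<Rightarrow> complex" where
  "uterm f x t jk = uhat f jk * exp (\<i> * of_real (2 * of_int (fst jk) * x + of_int (snd jk) * t))"

lemma useries_eq_infsum_uterm: "useries f x t = infsum (uterm f x t) nonres"
  unfolding useries_def uterm_def ..

lemma uterm_periodic:
  "uterm f (x + pi) t jk = uterm f x t jk" "uterm f x (t + 2 * pi) jk = uterm f x t jk"
proof -
  obtain j k where jk: "jk = (j, k)" by force
  have shift: "exp (\<i> * of_real y + (2 * of_int n * pi) * \<i>) = exp (\<i> * of_real y)" for y n
  proof -
    have "exp ((2 * of_int n * pi) * \<i>) = 1" by (subst exp_eq_1) (auto intro!: exI[of _ n])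
    thus ?thesis by (simp add: exp_add)
  qed
  have "\<i> * of_real (2 * of_int j * (x + pi) + of_int k * t) =
        \<i> * of_real (2 * of_int j * x + of_int k * t) + (2 * of_int j * pi) * \<i>"
       "\<i> * of_real (2 * of_int j * x + of_int k * (t + 2 * pi)) =
        \<i> * of_real (2 * of_int j * x + of_int k * t) + (2 * of_int k * pi) * \<i>"
    by (simp_all add: algebra_simps)
  thus "uterm f (x + pi) t jk = uterm f x t jk" "uterm f x (t + 2 * pi) jk = uterm f x t jk"
    unfolding uterm_def jk fst_conv snd_conv by (simp_all only: shift)
qed

lemma norm_uhat: "norm (uhat f jk) = norm (f jk) / real_of_int \<bar>4 * (fst jk)^2 - (snd jk)^2\<bar>"
  unfolding uhat_def norm_divide by (metis norm_of_int of_int_abs)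

lemma norm_uterm_le:
  assumes "jk \<in> nonres" "0 < g"
  shows "norm (uterm f x t jk) \<le> norm (f jk) * holder_weight g jk"
proof -
  obtain j k where jk: "jk = (j, k)" "2*\<bar>j\<bar> + \<bar>k\<bar> \<ge> 1" using assms(1) unfolding nonres_def by auto
  hence "1 \<le> real_of_int (2*\<bar>j\<bar> + \<bar>k\<bar>) powr g" using assms(2)
    by (intro ge_one_powr_ge_zero) (simp_all del: of_int_add of_int_mult of_int_abs)
  hence "1 / real_of_int \<bar>4 * j^2 - k^2\<bar> \<le> holder_weight g jk"
    unfolding holder_weight_def jk fst_conv snd_conv by (intro divide_right_mono) simp_all
  thus ?thesis unfolding uterm_def norm_mult norm_uhat jk
    by (simp add: divide_inverse mult_left_mono)
qed

lemma norm_uterm_diff_le: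
  assumes "0 < g" "g \<le> 1"
  shows "norm (uterm f x t jk - uterm f x' t' jk) \<le>
    norm (f jk) * holder_weight g jk * sqrt ((x - x')^2 + (t - t')^2) powr g"
proof -
  obtain j k where jk: "jk = (j, k)" by force
  define d where "d = sqrt ((x - x')^2 + (t - t')^2)"
  define m where "m = real_of_int (2*\<bar>j\<bar> + \<bar>k\<bar>)"
  have "\<bar>x - x'\<bar> \<le> d" "\<bar>t - t'\<bar> \<le> d"
    unfolding d_def by (simp_all add: real_le_rsqrt)
  hence "\<bar>of_int j\<bar> * \<bar>x - x'\<bar> \<le> \<bar>of_int j\<bar> * d" "\<bar>of_int k\<bar> * \<bar>t - t'\<bar> \<le> \<bar>of_int k\<bar> * d"
    by (simp_all add: mult_left_mono)
  moreover have "m * d = 2 * (\<bar>of_int j\<bar> * d) + \<bar>of_int k\<bar> * d"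
    unfolding m_def by (simp add: algebra_simps)
  moreover have "\<bar>(2 * of_int j * x + of_int k * t) - (2 * of_int j * x' + of_int k * t')\<bar>
      = \<bar>2 * of_int j * (x - x') + of_int k * (t - t')\<bar>"
    by (simp add: algebra_simps)
  moreover have "\<dots> \<le> 2 * \<bar>of_int j\<bar> * \<bar>x - x'\<bar> + \<bar>of_int k\<bar> * \<bar>t - t'\<bar>"
    using abs_triangle_ineq[of "2 * of_int j * (x - x')" "of_int k * (t - t')"]
    by (simp add: abs_mult)
  ultimately have phase: "\<bar>(2 * of_int j * x + of_int k * t) - (2 * of_int j * x' + of_int k * t')\<bar> \<le> m * d"
    by linarith
  have "norm (uterm f x t jk - uterm f x' t' jk) = norm (uhat f jk) *
     norm (exp (\<i> * of_real (2 * of_int j * x + of_int k * t)) - exp (\<i> * of_real (2 * of_int j * x' + of_int k * t')))"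
    unfolding uterm_def jk fst_conv snd_conv norm_mult[symmetric] right_diff_distrib ..
  also have "\<dots> \<le> norm (uhat f jk) * (2 * (m * d) powr g)"
  proof (intro mult_left_mono)
    show "norm (exp (\<i> * of_real (2 * of_int j * x + of_int k * t)) - exp (\<i> * of_real (2 * of_int j * x' + of_int k * t')))
        \<le> 2 * (m * d) powr g"
      using norm_exp_i_diff_le_powr[OF assms] powr_mono2[OF _ _ phase, of g] assms
      by (smt (verit) abs_ge_zero)
  qed simp
  also have "\<dots> = norm (f jk) * holder_weight g jk * d powr g"
    unfolding norm_uhat holder_weight_def jk m_def d_def
    by (simp add: powr_mult mult_ac)
  finally show ?thesis unfolding d_def .
qed

lemma useries_periodic:
  "useries f (x + pi) t = useries f x t" "useries f x (t + 2 * pi) = useries f x t"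
  unfolding useries_eq_infsum_uterm uterm_periodic by simp_all

lemma summable_on_holder_weight_mult_norm:
  assumes "p > 1" "q > 1" "1 / p + 1 / q = 1" "in_ellq q f" "0 < g" "g < 1 - 1 / p"
  shows "(\<lambda>jk. holder_weight g jk * norm (f jk)) summable_on nonres"
proof (rule summable_on_mult_Young[OF assms(1-3) holder_weight_nonneg norm_ge_zero])
  have "1 / p > 0" using assms(1) by simp
  hence "g < 1" using assms(6) by linarith
  moreover have "(1 - g) * p > 1" using assms(1,6) by (simp add: field_simps)
  ultimately show "(\<lambda>jk. holder_weight g jk powr p) summable_on nonres"
    using assms(1,5) by (intro holder_weight_powr_summable) auto
  show "(\<lambda>jk. norm (f jk) powr q) summable_on nonres"
    using assms(4) unfolding in_ellq_def by (rule summable_on_subset) simp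
qed

lemma norm_useries_diff_le:
  assumes "0 < g" "g \<le> 1" and W: "(\<lambda>jk. holder_weight g jk * norm (f jk)) summable_on nonres"
  shows "norm (useries f x t - useries f x' t') \<le>
    (\<Sum>\<^sub>\<infinity>jk\<in>nonres. holder_weight g jk * norm (f jk)) * sqrt ((x - x')^2 + (t - t')^2) powr g"
proof -
  let ?d = "sqrt ((x - x')^2 + (t - t')^2) powr g"
  have summable: "uterm f y s summable_on nonres" for y s
  proof (rule abs_summable_summable, rule summable_on_comparison_test[OF W])
    show "norm (uterm f y s jk) \<le> holder_weight g jk * norm (f jk)" if "jk \<in> nonres" for jk
      using norm_uterm_le[OF that assms(1)] by (simp add: mult.commute)
  qed simp
  have "norm (useries f x t - useries f x' t')
        \<le> (\<Sum>\<^sub>\<infinity>jk\<in>nonres. holder_weight g jk * norm (f jk) * ?d)"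
    unfolding useries_eq_infsum_uterm
  proof (rule norm_infsum_diff_le[OF summable summable summable_on_cmult_left[OF W]])
    show "norm (uterm f x t jk - uterm f x' t' jk) \<le> holder_weight g jk * norm (f jk) * ?d" for jk
      using norm_uterm_diff_le[OF assms(1,2)] by (simp add: mult_ac)
  qed
  also have "\<dots> = (\<Sum>\<^sub>\<infinity>jk\<in>nonres. holder_weight g jk * norm (f jk)) * ?d"
    by (rule infsum_cmult_left) (rule W)
  finally show ?thesis .
qed

theorem mainTheorem2:
  fixes p q :: real and f :: "int \<times> int \<Rightarrow> complex"
  assumes "p > 1" and "q > 1" and "1 / p + 1 / q = 1"
    and "in_ellq q f"
  shows "\<forall>\<gamma>. 0 < \<gamma> \<and> \<gamma> < 1 - 1 / p \<longrightarrow> holder_periodic \<gamma> (useries f)"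
proof (intro allI impI)
  fix g :: real assume g: "0 < g \<and> g < 1 - 1 / p"
  hence "0 < g" "g \<le> 1" using assms(1) by (smt (verit) divide_pos_pos)+
  moreover have "(\<lambda>jk. holder_weight g jk * norm (f jk)) summable_on nonres"
    using g by (intro summable_on_holder_weight_mult_norm[OF assms]) auto
  ultimately show "holder_periodic g (useries f)"
    unfolding holder_periodic_def using useries_periodic norm_useries_diff_le by meson
qed

end
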